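(* Let $\mathcal L\in C^1([0,\infty))$ satisfy $\mathcal L'(t)+2b\mathcal L(t)\le c+a\mathcal L^2(t)$ for every $t\ge0$, where $a,b,c>0$ and $\varrho:=\frac{b}{\sqrt{ac}}>1$. There exists a time $t_\varrho>0$ depending only on $\varrho$ such that: if $\mathcal L(0)\le\sqrt{c/a}\,(2\varrho-1)$, then $$\sup_{t\ge t_\varrho/\sqrt{ac}}\mathcal L(t)\le\sqrt{\frac ca}\,\frac{1}{2\varrho-1}.$$ *)

theory Defs
  imports "HOL-Analysis.Analysis"
begin

end

theory Submission
  imports Defs
begin

text \<open>Write \<open>k = sqrt (c/a)\<close> and \<open>m = 1/(2\<rho>-1)\<close>. On the band \<open>k m \<le> L \<le> k/m\<close> the
  differential inequality forces \<open>L' \<le> -c m (1-m)\<close>, because after the substitution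
  \<open>L = k y\<close> its right-hand side becomes \<open>c (y\<^sup>2 - 2\<rho>y + 1) = c ((y-m)(y-1/m) - (1-m) y)\<close>.
  A function that starts below the top of such a band and decreases at rate at least \<open>e\<close>
  while inside it stays below \<open>max (k m) (k/m - e t/2)\<close>: at the last time it touches this
  barrier it would have to cross it from below, contradicting the slope bound. Since
  \<open>e = c m (1-m)\<close> and \<open>k / c = 1/sqrt (a c)\<close>, the barrier reaches \<open>k m\<close> after the time
  \<open>2 (1/m - m) / (m (1-m)) / sqrt (a c) = 4\<rho>(2\<rho>-1) / sqrt (a c)\<close>.\<close>

lemma last_zero_before:
  fixes f :: "real \<Rightarrow> real"
  assumes "s \<le> t" and cont: "continuous_on {s..t} f" and "f s \<le> 0" and "0 < f t"
  obtains \<tau> where "s \<le> \<tau>" "\<tau> < t" "f \<tau> = 0" "\<And>u. \<tau> < u \<Longrightarrow> u \<le> t \<Longrightarrow> 0 < f u"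
proof -
  define Z where "Z = {s..t} \<inter> f -` {0}"
  have "closed Z"
    unfolding Z_def using cont by (rule continuous_closed_preimage) auto
  moreover have "Z \<noteq> {}"
    using IVT'[of f s 0 t] assms by (auto simp: Z_def)
  moreover have bdd: "bdd_above Z"
    by (auto simp: Z_def bdd_above_def)
  ultimately have "Sup Z \<in> Z"
    using closed_contains_Sup by blast
  hence Sup: "s \<le> Sup Z" "Sup Z \<le> t" "f (Sup Z) = 0"
    by (auto simp: Z_def)
  have "Sup Z < t"
    using Sup \<open>0 < f t\<close> by (cases "Sup Z = t") auto
  moreover have "0 < f u" if "Sup Z < u" "u \<le> t" for u
  proof (rule ccontr)
    assume "\<not> 0 < f u"
    moreover have "continuous_on {u..t} f"
      using cont by (rule continuous_on_subset) (use Sup that in auto)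
    ultimately obtain z where "u \<le> z" "z \<le> t" "f z = 0"
      using IVT'[of f u 0 t] \<open>0 < f t\<close> \<open>u \<le> t\<close> by auto
    hence "z \<in> Z"
      using that Sup by (auto simp: Z_def)
    hence "z \<le> Sup Z"
      using bdd by (rule cSup_upper)
    thus False
      using \<open>u \<le> z\<close> that by simp
  qed
  ultimately show thesis
    using that Sup by blast
qed

lemma descent_barrier:
  fixes L L' :: "real \<Rightarrow> real" and lo hi e t :: real
  assumes "0 < e" and "lo \<le> hi" and "0 \<le> t"
    and der: "\<And>t. 0 \<le> t \<Longrightarrow> (L has_real_derivative L' t) (at t within {0..})"
    and L0: "L 0 \<le> hi"
    and slope: "\<And>t. 0 \<le> t \<Longrightarrow> lo \<le> L t \<Longrightarrow> L t \<le> hi \<Longrightarrow> L' t \<le> -e"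
  shows "L t \<le> max lo (hi - e/2 * t)"
proof (rule ccontr)
  define G where "G t = max lo (hi - e/2 * t)" for t
  assume "\<not> ?thesis"
  hence "0 < L t - G t"
    by (simp add: G_def not_le)
  moreover have "continuous_on {0..t} (\<lambda>u. L u - G u)"
  proof -
    have "continuous_on {0..} L"
      by (rule DERIV_continuous_on) (use der in auto)
    thus ?thesis
      unfolding G_def by (intro continuous_intros) (auto elim: continuous_on_subset)
  qed
  moreover have "L 0 - G 0 \<le> 0"
    using L0 \<open>lo \<le> hi\<close> by (simp add: G_def)
  ultimately obtain \<tau> where \<tau>: "0 \<le> \<tau>" "\<tau> < t" "L \<tau> - G \<tau> = 0"
    and above: "\<And>u. \<tau> < u \<Longrightarrow> u \<le> t \<Longrightarrow> 0 < L u - G u"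
    using last_zero_before[of 0 t "\<lambda>u. L u - G u"] \<open>0 \<le> t\<close> by blast
  have "L' \<tau> < -e/2"
    using slope[of \<tau>] \<tau> \<open>0 < e\<close> \<open>lo \<le> hi\<close> by (simp add: G_def)
  moreover have "((\<lambda>u. (L u - L \<tau>) / (u - \<tau>)) \<longlongrightarrow> L' \<tau>) (at_right \<tau>)"
  proof (rule tendsto_within_subset)
    show "((\<lambda>u. (L u - L \<tau>) / (u - \<tau>)) \<longlongrightarrow> L' \<tau>) (at \<tau> within {0..})"
      using der[OF \<tau>(1)] by (simp only: has_field_derivative_iff)
  qed (use \<tau>(1) in auto)
  ultimately have "eventually (\<lambda>u. (L u - L \<tau>) / (u - \<tau>) < -e/2) (at_right \<tau>)"
    by (simp add: order_tendstoD(2))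
  moreover have "eventually (\<lambda>u. \<tau> < u \<and> u < t) (at_right \<tau>)"
    using eventually_at_right_real[OF \<tau>(2)] by simp
  ultimately have "eventually (\<lambda>u. False) (at_right \<tau>)"
  proof eventually_elim
    case (elim u)
    define d where "d = e/2 * (u - \<tau>)"
    have "L u - L \<tau> < - d"
      using elim by (simp add: d_def pos_divide_less_eq)
    moreover have "G \<tau> - d \<le> G u"
    proof -
      have shift: "hi - e/2 * \<tau> - d = hi - e/2 * u"
        by (simp add: d_def right_diff_distrib)
      have "G \<tau> - d = max (lo - d) (hi - e/2 * \<tau> - d)"
        by (simp add: G_def max_diff_distrib_left)
      also have "\<dots> \<le> max lo (hi - e/2 * \<tau> - d)"
        using elim \<open>0 < e\<close> by (intro max.mono) (simp_all add: d_def)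
      also have "\<dots> = G u"
        by (simp only: G_def shift)
      finally show ?thesis .
    qed
    ultimately show False
      using above[of u] elim \<tau>(3) by linarith
  qed
  thus False
    by simp
qed

lemma quadratic_neg_on_band:
  fixes \<rho> y :: real
  defines "m \<equiv> 1 / (2*\<rho> - 1)" and "M \<equiv> 2*\<rho> - 1"
  assumes "1 < \<rho>" and "m \<le> y" and "y \<le> M"
  shows "y\<^sup>2 - 2*\<rho>*y + 1 \<le> - m * (1 - m)"
proof -
  have m: "0 < m" "m < 1" "m * M = 1"
    using assms by (auto simp: m_def M_def divide_less_eq)
  have "y\<^sup>2 - 2*\<rho>*y + 1 = y\<^sup>2 - (M + 1) * y + m * M"
    using m by (simp add: M_def algebra_simps)
  also have "\<dots> = (y - m) * (y - M) - (1 - m) * y"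
    by (simp add: algebra_simps power2_eq_square)
  also have "\<dots> \<le> - m * (1 - m)"
  proof -
    have "(y - m) * (y - M) \<le> 0"
      using \<open>m \<le> y\<close> \<open>y \<le> M\<close> by (simp add: mult_nonneg_nonpos)
    moreover have "(1 - m) * m \<le> (1 - m) * y"
      using \<open>m \<le> y\<close> m(2) by (intro mult_left_mono) simp_all
    ultimately show ?thesis
      by (simp add: algebra_simps)
  qed
  finally show ?thesis .
qed

lemma riccati_rhs_neg_on_band:
  fixes a b c \<rho> k x :: real
  defines "m \<equiv> 1 / (2*\<rho> - 1)" and "M \<equiv> 2*\<rho> - 1"
  assumes "0 < a" "0 < c" "1 < \<rho>" and k: "k = sqrt (c / a)" and b: "b = \<rho> * sqrt (a * c)"
    and "k * m \<le> x" "x \<le> k * M"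
  shows "c + a * x\<^sup>2 - 2*b*x \<le> - (c * (m * (1 - m)))"
proof -
  have k: "0 < k" "a * k\<^sup>2 = c" "b * k = \<rho> * c"
    using assms by (auto simp: k real_sqrt_mult[symmetric] real_sqrt_mult_self)
  define y where "y = x / k"
  have x: "x = k * y"
    using k by (simp add: y_def)
  have "m \<le> y" "y \<le> M"
    using \<open>k * m \<le> x\<close> \<open>x \<le> k * M\<close> \<open>0 < k\<close> unfolding x by simp_all
  hence "y\<^sup>2 - 2*\<rho>*y + 1 \<le> - m * (1 - m)"
    unfolding m_def M_def using \<open>1 < \<rho>\<close> by (intro quadratic_neg_on_band)
  moreover have "c + a * x\<^sup>2 - 2*b*x = c * (y\<^sup>2 - 2*\<rho>*y + 1)"
  proof -
    have "a * x\<^sup>2 = (a * k\<^sup>2) * y\<^sup>2" and "2*b*x = 2 * (b * k) * y"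
      by (simp_all add: x power_mult_distrib)
    thus ?thesis
      using k by (simp add: algebra_simps)
  qed
  ultimately show ?thesis
    using mult_left_mono[of _ _ c] \<open>0 < c\<close> by fastforce
qed

lemma riccati_subsolution_bound:
  fixes L L' :: "real \<Rightarrow> real" and a b c \<rho> t :: real
  assumes "0 < a" "0 < c" "1 < \<rho>" and b: "b = \<rho> * sqrt (a * c)"
    and der: "\<And>t. 0 \<le> t \<Longrightarrow> (L has_real_derivative L' t) (at t within {0..})"
    and riccati: "\<And>t. 0 \<le> t \<Longrightarrow> L' t + 2 * b * L t \<le> c + a * (L t)\<^sup>2"
    and L0: "L 0 \<le> sqrt (c / a) * (2*\<rho> - 1)"
    and t: "4*\<rho>*(2*\<rho> - 1) / sqrt (a * c) \<le> t"
  shows "L t \<le> sqrt (c / a) / (2*\<rho> - 1)"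
proof -
  define m where "m = 1 / (2*\<rho> - 1)"
  define M where "M = 2*\<rho> - 1"
  define \<delta> where "\<delta> = m * (1 - m)"
  define k where "k = sqrt (c / a)"
  define s where "s = sqrt (a * c)"
  have m: "0 < m" "m < 1" "1 < M" "0 < \<delta>"
    using \<open>1 < \<rho>\<close> by (auto simp: m_def M_def \<delta>_def divide_less_eq)
  have "0 < k" "0 < s"
    using \<open>0 < a\<close> \<open>0 < c\<close> by (simp_all add: k_def s_def)
  have "k * s = sqrt (c / a * (a * c))"
    by (simp only: k_def s_def real_sqrt_mult)
  also have "c / a * (a * c) = c\<^sup>2"
    using \<open>0 < a\<close> by (simp add: power2_eq_square)
  finally have ks: "k * s = c"
    using \<open>0 < c\<close> by simp
  have "0 < 4*\<rho>*(2*\<rho> - 1) / s"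
    using \<open>1 < \<rho>\<close> \<open>0 < s\<close> by simp
  with t have "0 \<le> t"
    unfolding s_def by linarith
  have barrier: "L t \<le> max (k * m) (k * M - c * \<delta> / 2 * t)"
  proof (rule descent_barrier[where L = L and L' = L' and t = t])
    fix \<tau> :: real
    assume \<tau>: "0 \<le> \<tau>" "k * m \<le> L \<tau>" "L \<tau> \<le> k * M"
    have "c + a * (L \<tau>)\<^sup>2 - 2*b*L \<tau> \<le> - (c * \<delta>)"
      unfolding \<delta>_def m_def
      by (rule riccati_rhs_neg_on_band[OF \<open>0 < a\<close> \<open>0 < c\<close> \<open>1 < \<rho>\<close> k_def b])
        (use \<tau> in \<open>simp_all add: m_def M_def\<close>)
    with riccati[OF \<tau>(1)] show "L' \<tau> \<le> - (c * \<delta>)"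
      by linarith
  next
    show "0 < c * \<delta>"
      using m \<open>0 < c\<close> by simp
    show "k * m \<le> k * M"
      using m \<open>0 < k\<close> by simp
    show "L 0 \<le> k * M"
      using L0 by (simp add: k_def M_def)
  qed fact+
  \<comment> \<open>the time the barrier needs to fall from \<open>k M\<close> to \<open>k m\<close>\<close>
  have settling_time: "4*\<rho>*(2*\<rho> - 1) = 2 * (M - m) / \<delta>"
  proof -
    have mM: "m = 1 / M" and "M \<noteq> 0" "M - 1 \<noteq> 0"
      using m by (simp_all add: m_def M_def)
    have "4*\<rho>*(2*\<rho> - 1) = 2 * (M + 1) * M"
      by (simp add: M_def algebra_simps)
    also have "\<dots> = 2 * (M - m) / \<delta>"
      using \<open>M \<noteq> 0\<close> \<open>M - 1 \<noteq> 0\<close> unfolding \<delta>_def mM by (simp add: field_simps)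
    finally show ?thesis .
  qed
  have "k * (M - m) = c * \<delta> / 2 * (4*\<rho>*(2*\<rho> - 1) / s)"
    using m \<open>0 < s\<close> unfolding settling_time ks[symmetric] by (simp add: field_simps)
  also have "\<dots> \<le> c * \<delta> / 2 * t"
    using t m \<open>0 < c\<close> unfolding s_def by (intro mult_left_mono) simp_all
  finally have "k * M - c * \<delta> / 2 * t \<le> k * m"
    by (simp add: right_diff_distrib)
  with barrier show ?thesis
    by (simp add: k_def m_def)
qed

theorem lemma5p2:
  fixes \<rho> :: real
  assumes "\<rho> > 1"
  shows "\<exists>t\<rho>::real. t\<rho> > 0 \<and>
    (\<forall>(a::real) (b::real) (c::real) (L::real \<Rightarrow> real) (L'::real \<Rightarrow> real).
       a > 0 \<longrightarrow> b > 0 \<longrightarrow> c > 0 \<longrightarrow> b / sqrt (a * c) = \<rho> \<longrightarrow>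
       (\<forall>t\<ge>0. (L has_real_derivative L' t) (at t within {0..})) \<longrightarrow>
       continuous_on {0..} L' \<longrightarrow>
       (\<forall>t\<ge>0. L' t + 2 * b * L t \<le> c + a * (L t)\<^sup>2) \<longrightarrow>
       L 0 \<le> sqrt (c / a) * (2 * \<rho> - 1) \<longrightarrow>
       (\<forall>t\<ge>t\<rho> / sqrt (a * c). L t \<le> sqrt (c / a) * (1 / (2 * \<rho> - 1))))"
proof -
  have pos: "0 < 4*\<rho>*(2*\<rho> - 1)"
    using assms by simp
  have bound: "L t \<le> sqrt (c / a) * (1 / (2 * \<rho> - 1))"
    if "0 < a" "0 < c" "b / sqrt (a * c) = \<rho>"
      and "\<forall>t\<ge>0. (L has_real_derivative L' t) (at t within {0..})"
      and "\<forall>t\<ge>0. L' t + 2 * b * L t \<le> c + a * (L t)\<^sup>2"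
      and "L 0 \<le> sqrt (c / a) * (2 * \<rho> - 1)"
      and "4*\<rho>*(2*\<rho> - 1) / sqrt (a * c) \<le> t"
    for a b c t and L L' :: "real \<Rightarrow> real"
    using riccati_subsolution_bound[of a c \<rho> b L L' t] that assms
    by (simp add: divide_eq_eq)
  show ?thesis
    by (intro exI[of _ "4*\<rho>*(2*\<rho> - 1)"] conjI allI impI pos) (rule bound; assumption)
qed

end
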